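(* Let $2\le n\le+\infty$ and let $\{a_i\}_{i=1}^n$ be a non-increasing $n$-tuple (sequence if $n=+\infty$) of positive numbers with $\sum_{i=1}^n a_i\le 1$ and $\sum_{i=1}^n\eta(a_i)<+\infty$. Let $I_n=\mathbb{N}\cap[1,n]$, $b>0$, $c\ge0$, and $$\Omega=\Big\{\{x_i\}_{i=1}^n\ :\ x_1\in[0,c],\ x_i\in\mathbb{R},\ x_{i-1}\le x_i\ \forall i\in I_n\setminus\{1\},\ \sum_{i=1}^n a_ix_i=1\Big\}.$$ Then there exists a unique $n$-tuple $\bar{x}_b=\{x^b_i\}_{i=1}^n$ of nonnegative numbers belonging to $\Omega$ such that $$\sum_{i=1}^n e^{-bx^b_i}=\inf\Big\{\sum_{i=1}^n e^{-bx_i}\ :\ \{x_i\}_{i=1}^n\in\Omega\Big\}.$$ Define $d_k=\sum_{i=k+1}^n a_i$ and $s_k=\sum_{i=k+1}^n\eta(a_i)$ for $k\in\{0\}\cup I_{n-1}$, and the non-increasing family $b_0=\frac{s_0+d_0\ln a_1}{1-cd_0}$ if $cd_0<1$, $b_0=+\infty$ if $cd_0\ge1$; $b_k=s_{k-1}+d_{k-1}\ln a_k$ for $k\in I_n$; $b_n=0$ if $n<+\infty$. Then: <ul> <li>If $b\in[b_1,b_0]\cap(0,+\infty)$, then $x^b_i=\frac1b\left(\frac{b-s_0}{d_0}-\ln a_i\right)$ for $i\in I_n$, and $\sum_{i=1}^n e^{-bx^b_i}=d_0e^{\frac{s_0-b}{d_0}}$.</li> <li>If $b\in[b_{k+1},b_k)\cap(0,+\infty)$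 for some $k\in I_{n-1}$, then $x^b_i=0$ for $1\le i\le k$, $x^b_i=\frac1b\left(\frac{b-s_k}{d_k}-\ln a_i\right)$ for $i\in I_n\setminus\{1,\dots,k\}$, and $\sum_{i=1}^n e^{-bx^b_i}=k+d_ke^{\frac{s_k-b}{d_k}}$.</li> <li>If $b_0<+\infty$ and $b>b_0$, then $x^b_1=c$, $x^b_i=\frac1b\left(\frac{b(1-a_1c)-s_1}{d_1}-\ln a_i\right)$ for $i\in I_n\setminus\{1\}$, and $\sum_{i=1}^n e^{-bx^b_i}=e^{-bc}\left(1+d_1e^{\frac{s_1-b(1-cd_0)}{d_1}}\right)$.</li> </ul> For each $i\in I_n$ the function $b\mapsto x^b_i$ is continuous on $(0,+\infty)$. For any $b>0$ and $c>0$ the infimum above equals $$z_c(b)=\sum_{k=0}^{n-1}\mathbf{1}_{B_k}(b)\left(k+d_ke^{\frac{s_k-b}{d_k}}\right)+\mathbf{1}_{B_c}(b)\,e^{-bc}\left(1+d_1e^{\frac{s_1-b(1-cd_0)}{d_1}}\right),$$ where $B_k=[b_{k+1},b_k)$ for $k\in\{0\}\cup I_{n-1}$ and $B_c=[b_0,+\infty)$. If $c=0$, then $b_1=b_0$ and for any $b>0$ the infimum above equals $$z_0(b)=\sum_{k=1}^{n-1}\mathbf{1}_{B'_k}(b)\left(k+d_ke^{\frac{s_k-b}{d_k}}\right),$$ where $B'_k=[b_{k+1},b_k)$ for $k\in I_{n-1}\setminus\{1\}$ and $B'_1=[b_2,+\infty)$.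
   Context: $\eta(x)=-x\ln x$ for $x>0$, $\eta(0)=0$. An $n$-tuple with $n=+\infty$ means a sequence. Intervals $(a,b]$ with $b=+\infty$ mean $(a,+\infty)$. $\mathbf{1}_B$ denotes the indicator function of a set $B$. *)

theory Defs
  imports "HOL-Analysis.Analysis" "HOL-Library.Extended_Nat" "HOL-Library.Extended_Real"
          "HOL-Library.Extended_Nonnegative_Real"
begin

definition eta :: "real \<Rightarrow> real" where
  "eta x = (if x > 0 then - x * ln x else 0)"

definition Idx :: "enat \<Rightarrow> nat set" where
  "Idx n = {i. 1 \<le> i \<and> enat i \<le> n}"

text \<open>The feasible set Omega. An n-tuple is represented by a function nat \<Rightarrow> real
  which is 0 outside I_n (canonical representative, so that uniqueness is meaningful).\<close>
definition Omega :: "enat \<Rightarrow> (nat \<Rightarrow> real) \<Rightarrow> real \<Rightarrow> (nat \<Rightarrow> real) set" where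
  "Omega n a c = {x. (\<forall>i. i \<notin> Idx n \<longrightarrow> x i = 0) \<and>
      x 1 \<in> {0..c} \<and>
      (\<forall>i\<in>Idx n - {1}. x (i - 1) \<le> x i) \<and>
      (\<lambda>i. a i * x i) summable_on Idx n \<and> (\<Sum>\<^sub>\<infinity>i\<in>Idx n. a i * x i) = 1}"

definition objF :: "enat \<Rightarrow> real \<Rightarrow> (nat \<Rightarrow> real) \<Rightarrow> ennreal" where
  "objF n b x = (\<Sum>\<^sub>\<infinity>i\<in>Idx n. ennreal (exp (- b * x i)))"

definition infval :: "enat \<Rightarrow> (nat \<Rightarrow> real) \<Rightarrow> real \<Rightarrow> real \<Rightarrow> ennreal" where
  "infval n a c b = (INF y\<in>Omega n a c. objF n b y)"

text \<open>The minimiser x^b (well defined by the existence/uniqueness part of the theorem).\<close>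
definition xopt :: "enat \<Rightarrow> (nat \<Rightarrow> real) \<Rightarrow> real \<Rightarrow> real \<Rightarrow> nat \<Rightarrow> real" where
  "xopt n a c b = (THE x. x \<in> Omega n a c \<and> (\<forall>i. 0 \<le> x i) \<and> objF n b x = infval n a c b)"

definition dsum :: "enat \<Rightarrow> (nat \<Rightarrow> real) \<Rightarrow> nat \<Rightarrow> real" where
  "dsum n a k = (\<Sum>\<^sub>\<infinity>i\<in>{i\<in>Idx n. k < i}. a i)"

definition ssum :: "enat \<Rightarrow> (nat \<Rightarrow> real) \<Rightarrow> nat \<Rightarrow> real" where
  "ssum n a k = (\<Sum>\<^sub>\<infinity>i\<in>{i\<in>Idx n. k < i}. eta (a i))"

definition bk :: "enat \<Rightarrow> (nat \<Rightarrow> real) \<Rightarrow> real \<Rightarrow> nat \<Rightarrow> ereal" where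
  "bk n a c k =
     (if k = 0 then
        (if c * dsum n a 0 < 1
         then ereal ((ssum n a 0 + dsum n a 0 * ln (a 1)) / (1 - c * dsum n a 0))
         else \<infinity>)
      else if enat k = n then 0
      else ereal (ssum n a (k - 1) + dsum n a (k - 1) * ln (a k)))"

definition Bset :: "enat \<Rightarrow> (nat \<Rightarrow> real) \<Rightarrow> real \<Rightarrow> nat \<Rightarrow> real set" where
  "Bset n a c k = {t. bk n a c (Suc k) \<le> ereal t \<and> ereal t < bk n a c k}"

definition Bc :: "enat \<Rightarrow> (nat \<Rightarrow> real) \<Rightarrow> real \<Rightarrow> real set" where
  "Bc n a c = {t. bk n a c 0 \<le> ereal t}"

definition Bset' :: "enat \<Rightarrow> (nat \<Rightarrow> real) \<Rightarrow> real \<Rightarrow> nat \<Rightarrow> real set" where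
  "Bset' n a c k = (if k = 1 then {t. bk n a c 2 \<le> ereal t} else Bset n a c k)"

definition zc :: "enat \<Rightarrow> (nat \<Rightarrow> real) \<Rightarrow> real \<Rightarrow> real \<Rightarrow> real" where
  "zc n a c b =
     (\<Sum>\<^sub>\<infinity>k\<in>{k. enat k < n}. indicator (Bset n a c k) b *
          (real k + dsum n a k * exp ((ssum n a k - b) / dsum n a k)))
     + indicator (Bc n a c) b * (exp (- b * c) *
          (1 + dsum n a 1 * exp ((ssum n a 1 - b * (1 - c * dsum n a 0)) / dsum n a 1)))"

definition z0 :: "enat \<Rightarrow> (nat \<Rightarrow> real) \<Rightarrow> real \<Rightarrow> real" where
  "z0 n a b =
     (\<Sum>\<^sub>\<infinity>k\<in>{k. 1 \<le> k \<and> enat k < n}. indicator (Bset' n a 0 k) b *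
          (real k + dsum n a k * exp ((ssum n a k - b) / dsum n a k)))"

end

theory Submission
  imports Defs
begin

text \<open>For fixed b the minimiser is a water-filling profile y: it is constant (0, or c on the
  first coordinate) on an initial block 1..k and equals (mu - ln a_i)/b on the tail, so that
  exp(-b y_i) is proportional to a_i there. Since t \<mapsto> exp(-b t) is strictly convex, a feasible
  y is the unique minimiser as soon as its tangent weights w_i = exp(-b y_i) satisfy
  sum w_i x_i \<le> sum w_i y_i for every x in Omega. On the tail this is the linear constraint
  sum a_i x_i = 1, on the block it is a sign condition. For b \<in> [b_{k+1}, b_k) the profile with
  block length k works: b \<ge> b_{k+1} keeps its tail above the block, b \<le> b_k gives the sign
  condition. The thresholds decrease to 0 because the entropy tails s_k do, so every b > 0 falls
  into some regime, and the regime formulas agree at the thresholds, which gives continuity in b.\<close>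

section \<open>Strict convexity of the objective\<close>

lemma add_one_less_exp:
  fixes t :: real
  assumes "t \<noteq> 0"
  shows "1 + t < exp t"
proof (cases "1 + t/2 \<ge> 0")
  case True
  have "exp t = exp (t/2) * exp (t/2)" by (simp flip: exp_add)
  moreover have "1 + t/2 \<le> exp (t/2)" by simp
  ultimately have "(1 + t/2) * (1 + t/2) \<le> exp t" using True by (metis mult_mono')
  moreover have "0 < t * t" using assms by (metis not_real_square_gt_zero)
  then have "1 + t < (1 + t/2) * (1 + t/2)" by (simp add: algebra_simps)
  ultimately show ?thesis by linarith
next
  case False
  then have "1 + t < 0" by simp
  then show ?thesis using exp_gt_zero[of t] by linarith
qed

lemma exp_tangent_less:
  fixes u v :: real
  assumes "u \<noteq> v"
  shows "exp u + exp u * (v - u) < exp v"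
proof -
  have "exp u * (1 + (v - u)) < exp u * exp (v - u)"
    using add_one_less_exp[of "v - u"] assms by simp
  also have "\<dots> = exp v" by (simp flip: exp_add)
  finally show ?thesis by (simp add: algebra_simps)
qed

lemma exp_tangent_le:
  fixes u v :: real
  shows "exp u + exp u * (v - u) \<le> exp v"
  using exp_tangent_less[of u v] by (cases "u = v") auto

lemma infsum_ennreal_eq:
  fixes f :: "'a \<Rightarrow> real"
  assumes "f summable_on A" "\<And>x. x \<in> A \<Longrightarrow> 0 \<le> f x"
  shows "(\<Sum>\<^sub>\<infinity>x\<in>A. ennreal (f x)) = ennreal (\<Sum>\<^sub>\<infinity>x\<in>A. f x)"
proof -
  have "(\<Sum>\<^sub>\<infinity>x\<in>A. ennreal (f x)) = (SUP F\<in>{F. finite F \<and> F \<subseteq> A}. sum (\<lambda>x. ennreal (f x)) F)"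
    by (rule nonneg_infsum_complete) simp
  also have "\<dots> = (SUP F\<in>{F. finite F \<and> F \<subseteq> A}. ennreal (sum f F))"
    using assms(2) by (intro SUP_cong refl) (auto intro!: sum_ennreal)
  also have "\<dots> = ennreal (infsum f A)"
    using infsum_nonneg_is_SUPREMUM_ennreal[OF assms] by simp
  finally show ?thesis .
qed

lemma summable_on_if_infsum_ennreal_finite:
  fixes f :: "'a \<Rightarrow> real"
  assumes "\<And>x. x \<in> A \<Longrightarrow> 0 \<le> f x" "(\<Sum>\<^sub>\<infinity>x\<in>A. ennreal (f x)) < \<infinity>"
  shows "f summable_on A"
proof (rule nonneg_bdd_above_summable_on)
  show "\<And>x. x \<in> A \<Longrightarrow> 0 \<le> f x" by fact
  let ?M = "(\<Sum>\<^sub>\<infinity>x\<in>A. ennreal (f x))"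
  have "sum f F \<le> enn2real ?M" if "F \<subseteq> A" "finite F" for F
  proof -
    have "ennreal (sum f F) = sum (\<lambda>x. ennreal (f x)) F"
      using that assms(1) by (intro sum_ennreal[symmetric]) auto
    also have "\<dots> \<le> ?M"
      using that by (subst nonneg_infsum_complete) (auto intro!: SUP_upper)
    finally have "ennreal (sum f F) \<le> ?M" .
    then show ?thesis using assms(2)
      by (metis enn2real_ennreal enn2real_mono sum_nonneg assms(1) subsetD that(1) infinity_ennreal_def)
  qed
  then show "bdd_above (sum f ` {F. F \<subseteq> A \<and> finite F})"
    by (auto intro!: bdd_aboveI)
qed

text \<open>Summing the tangent bound of exp at -b y_i reduces the comparison of the objectives to
  that of the linear forms with weights exp(-b y_i).\<close>

lemma infsum_ennreal_exp_less:
  fixes b Sy Wx Wy :: real and x y :: "'a \<Rightarrow> real"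
  assumes b: "0 < b"
    and hy: "((\<lambda>i. exp (- b * y i)) has_sum Sy) A"
    and hwx: "((\<lambda>i. exp (- b * y i) * x i) has_sum Wx) A"
    and hwy: "((\<lambda>i. exp (- b * y i) * y i) has_sum Wy) A"
    and first_order: "Wx \<le> Wy"
    and j: "j \<in> A" "x j \<noteq> y j"
  shows "(\<Sum>\<^sub>\<infinity>i\<in>A. ennreal (exp (- b * y i))) < (\<Sum>\<^sub>\<infinity>i\<in>A. ennreal (exp (- b * x i)))"
proof -
  have Sy_nonneg: "0 \<le> Sy" by (rule has_sum_nonneg[OF hy]) simp
  have lhs: "(\<Sum>\<^sub>\<infinity>i\<in>A. ennreal (exp (- b * y i))) = ennreal Sy"
    using infsum_ennreal_eq[OF has_sum_imp_summable[OF hy]] infsumI[OF hy] by simp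
  show ?thesis
  proof (cases "(\<Sum>\<^sub>\<infinity>i\<in>A. ennreal (exp (- b * x i))) = \<infinity>")
    case True
    then show ?thesis unfolding lhs by simp
  next
    case False
    then have sx: "(\<lambda>i. exp (- b * x i)) summable_on A"
      by (intro summable_on_if_infsum_ennreal_finite) (auto simp: top.not_eq_extremum)
    define L where "L i = exp (- b * y i) + b * (exp (- b * y i) * y i) + - (b * (exp (- b * y i) * x i))" for i
    have L_eq: "L i = exp (- b * y i) + exp (- b * y i) * (- b * x i - - b * y i)" for i
      by (simp add: L_def algebra_simps)
    have "(L has_sum (Sy + b * Wy + - (b * Wx))) A"
      unfolding L_def by (intro has_sum_add has_sum_uminusI has_sum_cmult_right hy hwx hwy)
    moreover have "L i \<le> exp (- b * x i)" for i
      unfolding L_eq by (rule exp_tangent_le)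
    moreover have "L j < exp (- b * x j)"
      unfolding L_eq using j b by (intro exp_tangent_less) simp
    ultimately have "Sy + b * Wy + - (b * Wx) < (\<Sum>\<^sub>\<infinity>i\<in>A. exp (- b * x i))"
      using has_sum_strict_mono[OF _ has_sum_infsum[OF sx] _ j(1)] by blast
    moreover have "b * Wx \<le> b * Wy" using b first_order by simp
    ultimately have "Sy < (\<Sum>\<^sub>\<infinity>i\<in>A. exp (- b * x i))" by linarith
    then show ?thesis
      unfolding lhs infsum_ennreal_eq[OF sx exp_ge_zero] using Sy_nonneg by (simp add: ennreal_less_iff)
  qed
qed

lemma infsum_eq_single:
  fixes g :: "'a \<Rightarrow> 'b::{topological_comm_monoid_add, t2_space}"
  assumes "k \<in> S" "\<And>j. j \<in> S \<Longrightarrow> j \<noteq> k \<Longrightarrow> g j = 0"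
  shows "(\<Sum>\<^sub>\<infinity>j\<in>S. g j) = g k"
proof -
  have "(\<Sum>\<^sub>\<infinity>j\<in>S. g j) = (\<Sum>\<^sub>\<infinity>j\<in>{k}. g j)"
    by (rule infsum_cong_neutral) (use assms in auto)
  then show ?thesis by simp
qed

lemma closed_ereal_ge: "closed {t::real. e \<le> ereal t}"
  by (rule closed_Collect_le[OF continuous_on_const continuous_on_ereal[OF continuous_on_id]])

lemma closed_ereal_le: "closed {t::real. ereal t \<le> e}"
  by (rule closed_Collect_le[OF continuous_on_ereal[OF continuous_on_id] continuous_on_const])

section \<open>Strict minimisers\<close>

lemma Omega_nonneg:
  assumes "x \<in> Omega n a c"
  shows "0 \<le> x i"
proof (induction i)
  case 0
  have "0 \<notin> Idx n" by (simp add: Idx_def)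
  then show ?case using assms by (simp add: Omega_def)
next
  case (Suc j)
  show ?case
  proof (cases "Suc j \<in> Idx n - {1}")
    case True
    have "\<forall>i\<in>Idx n - {1}. x (i - 1) \<le> x i" using assms by (simp add: Omega_def)
    from this[rule_format, OF True] have "x j \<le> x (Suc j)" by simp
    then show ?thesis using Suc by simp
  next
    case False
    then show ?thesis using assms by (auto simp: Omega_def)
  qed
qed

lemma Omega_has_sum:
  assumes "x \<in> Omega n a c"
  shows "((\<lambda>i. a i * x i) has_sum 1) (Idx n)"
proof -
  have "(\<lambda>i. a i * x i) summable_on Idx n" "(\<Sum>\<^sub>\<infinity>i\<in>Idx n. a i * x i) = 1"
    using assms by (simp_all add: Omega_def)
  then show ?thesis by (metis has_sum_infsum)
qed

definition strict_minimiser :: "enat \<Rightarrow> (nat \<Rightarrow> real) \<Rightarrow> real \<Rightarrow> real \<Rightarrow> (nat \<Rightarrow> real) \<Rightarrow> bool" where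
  "strict_minimiser n a c b y \<longleftrightarrow>
     y \<in> Omega n a c \<and> (\<forall>x\<in>Omega n a c. x \<noteq> y \<longrightarrow> objF n b y < objF n b x)"

lemma strict_minimiser_infval:
  assumes "strict_minimiser n a c b y"
  shows "infval n a c b = objF n b y"
  unfolding infval_def
proof (rule antisym)
  show "(INF x\<in>Omega n a c. objF n b x) \<le> objF n b y"
    using assms by (intro INF_lower) (simp add: strict_minimiser_def)
  show "objF n b y \<le> (INF x\<in>Omega n a c. objF n b x)"
    using assms by (intro INF_greatest) (metis order.refl less_imp_le strict_minimiser_def)
qed

lemma strict_minimiser_characterisation:
  assumes "strict_minimiser n a c b y"
  shows "x \<in> Omega n a c \<and> (\<forall>i. 0 \<le> x i) \<and> objF n b x = infval n a c b \<longleftrightarrow> x = y"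
  using assms Omega_nonneg strict_minimiser_infval[OF assms]
  by (auto simp: strict_minimiser_def)

lemma strict_minimiser_xopt:
  assumes "strict_minimiser n a c b y"
  shows "xopt n a c b = y"
  unfolding xopt_def strict_minimiser_characterisation[OF assms] by simp

lemma strict_minimiser_ex1:
  assumes "strict_minimiser n a c b y"
  shows "\<exists>!x. x \<in> Omega n a c \<and> (\<forall>i. 0 \<le> x i) \<and> objF n b x = infval n a c b"
  unfolding strict_minimiser_characterisation[OF assms] by simp

section \<open>Weights, tail sums and thresholds\<close>

locale entropy_weights =
  fixes n :: enat and a :: "nat \<Rightarrow> real" and c :: real
  assumes two_le_n: "2 \<le> n"
    and a_pos: "i \<in> Idx n \<Longrightarrow> 0 < a i"
    and a_antimono: "i \<in> Idx n \<Longrightarrow> j \<in> Idx n \<Longrightarrow> i \<le> j \<Longrightarrow> a j \<le> a i"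
    and a_summable: "a summable_on Idx n"
    and a_sum_le_1: "(\<Sum>\<^sub>\<infinity>i\<in>Idx n. a i) \<le> 1"
    and eta_summable: "(\<lambda>i. eta (a i)) summable_on Idx n"
    and c_nonneg: "0 \<le> c"
begin

abbreviation head :: "nat \<Rightarrow> nat set" where "head k \<equiv> {i\<in>Idx n. i \<le> k}"
abbreviation tail :: "nat \<Rightarrow> nat set" where "tail k \<equiv> {i\<in>Idx n. k < i}"
abbreviation d :: "nat \<Rightarrow> real" where "d \<equiv> dsum n a"
abbreviation s :: "nat \<Rightarrow> real" where "s \<equiv> ssum n a"

lemma Suc_in_Idx: "enat k < n \<Longrightarrow> Suc k \<in> Idx n"
  by (simp add: Idx_def Suc_ile_eq)

lemma one_less_n: "enat 1 < n"
proof -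
  have "enat 1 < 2" by (simp add: numeral_eq_enat)
  then show ?thesis using two_le_n by (rule less_le_trans)
qed

lemma one_in_Idx: "1 \<in> Idx n"
  using less_imp_le[OF one_less_n] by (simp add: Idx_def)

lemma a_le_1:
  assumes "i \<in> Idx n"
  shows "a i \<le> 1"
proof -
  have "(\<Sum>\<^sub>\<infinity>j\<in>{i}. a j) \<le> (\<Sum>\<^sub>\<infinity>j\<in>Idx n. a j)"
    using assms a_summable by (intro infsum_mono_neutral) (auto intro!: less_imp_le[OF a_pos])
  then show ?thesis using a_sum_le_1 by simp
qed

lemma eta_a: "i \<in> Idx n \<Longrightarrow> eta (a i) = - a i * ln (a i)"
  using a_pos by (simp add: eta_def)

lemma eta_a_nonneg:
  assumes "i \<in> Idx n"
  shows "0 \<le> eta (a i)"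
proof -
  have "ln (a i) \<le> 0" using a_pos[OF assms] a_le_1[OF assms] by simp
  then show ?thesis using a_pos[OF assms] by (simp add: eta_a[OF assms] mult_nonneg_nonpos)
qed

lemma has_sum_d: "(a has_sum d k) (tail k)"
  unfolding dsum_def by (rule has_sum_infsum, rule summable_on_subset_banach[OF a_summable]) auto

lemma has_sum_s: "((\<lambda>i. eta (a i)) has_sum s k) (tail k)"
  unfolding ssum_def by (rule has_sum_infsum, rule summable_on_subset_banach[OF eta_summable]) auto

lemma d_nonneg: "0 \<le> d k"
  by (rule has_sum_nonneg[OF has_sum_d]) (auto intro: less_imp_le[OF a_pos])

lemma tail_Suc:
  assumes "Suc k \<in> Idx n"
  shows "tail k = insert (Suc k) (tail (Suc k))"
  using assms by auto

lemma d_Suc: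
  assumes "Suc k \<in> Idx n"
  shows "d k = a (Suc k) + d (Suc k)"
proof -
  have "(a has_sum (a (Suc k) + d (Suc k))) (tail k)"
    unfolding tail_Suc[OF assms] by (rule has_sum_insert) (simp_all add: has_sum_d)
  then show ?thesis by (rule has_sum_unique[OF has_sum_d])
qed

lemma s_Suc:
  assumes "Suc k \<in> Idx n"
  shows "s k = eta (a (Suc k)) + s (Suc k)"
proof -
  have "((\<lambda>i. eta (a i)) has_sum (eta (a (Suc k)) + s (Suc k))) (tail k)"
    unfolding tail_Suc[OF assms] by (rule has_sum_insert) (simp_all add: has_sum_s)
  then show ?thesis by (rule has_sum_unique[OF has_sum_s])
qed

lemma tail_empty:
  assumes "Suc k \<notin> Idx n"
  shows "tail k = {}"
proof -
  have False if "i \<in> Idx n" "k < i" for i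
  proof -
    have "enat (Suc k) \<le> enat i" using that by simp
    also have "\<dots> \<le> n" using that by (simp add: Idx_def)
    finally show False using assms by (simp add: Idx_def)
  qed
  then show ?thesis by auto
qed

lemma d_eq_0: "Suc k \<notin> Idx n \<Longrightarrow> d k = 0"
  unfolding dsum_def by (simp add: tail_empty)

lemma s_eq_0: "Suc k \<notin> Idx n \<Longrightarrow> s k = 0"
  unfolding ssum_def by (simp add: tail_empty)

lemma d_pos: "enat k < n \<Longrightarrow> 0 < d k"
  using d_Suc[OF Suc_in_Idx] a_pos[OF Suc_in_Idx] d_nonneg by (metis add_pos_nonneg)

lemma finite_head: "finite (head k)"
  by (rule finite_subset[of _ "{..k}"]) auto

lemma head_eq:
  assumes "enat k < n"
  shows "head k = {1..k}"
proof -
  have "enat i \<le> n" if "i \<le> k" for i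
    using that assms by (meson enat_ord_simps(1) less_imp_le order_trans)
  then show ?thesis by (auto simp: Idx_def)
qed

lemma has_sum_head_tail:
  fixes f :: "nat \<Rightarrow> real"
  assumes "(f has_sum S) (tail k)"
  shows "(f has_sum (sum f (head k) + S)) (Idx n)"
proof -
  have "(f has_sum (sum f (head k) + S)) (head k \<union> tail k)"
    using finite_head assms by (intro has_sum_Un_disjoint has_sum_finite) auto
  moreover have "head k \<union> tail k = Idx n" by auto
  ultimately show ?thesis by simp
qed

lemma has_sum_tail:
  fixes f :: "nat \<Rightarrow> real"
  assumes "(f has_sum S) (Idx n)"
  shows "(f has_sum (S - sum f (head k))) (tail k)"
proof -
  have "f summable_on tail k"
    using has_sum_imp_summable[OF assms] by (rule summable_on_subset_banach) auto
  then have "(f has_sum infsum f (tail k)) (tail k)" by simp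
  moreover have "S = sum f (head k) + infsum f (tail k)"
    using has_sum_unique[OF assms has_sum_head_tail[OF calculation]] .
  ultimately show ?thesis by simp
qed

text \<open>The real value of b_k for k \<ge> 1; for finite n it vanishes at k = n, in accordance with the
  convention b_n = 0.\<close>

definition thresh :: "nat \<Rightarrow> real" where
  "thresh k = s (k - 1) + d (k - 1) * ln (a k)"

lemma thresh_Suc: "thresh (Suc k) = s k + d k * ln (a (Suc k))"
  by (simp add: thresh_def)

lemma thresh_Idx:
  assumes "k \<in> Idx n"
  shows "thresh k = s k + d k * ln (a k)"
proof -
  have k: "Suc (k - 1) = k" "Suc (k - 1) \<in> Idx n" using assms by (auto simp: Idx_def)
  show ?thesis
    using d_Suc[OF k(2)] s_Suc[OF k(2)] eta_a[OF assms] unfolding thresh_def k(1)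
    by (simp add: algebra_simps)
qed

lemma thresh_nonneg:
  assumes "1 \<le> j"
  shows "0 \<le> thresh j"
proof -
  have "((\<lambda>i. eta (a i) + ln (a j) * a i) has_sum (s (j - 1) + ln (a j) * d (j - 1))) (tail (j - 1))"
    by (intro has_sum_add has_sum_cmult_right has_sum_s has_sum_d)
  moreover have "0 \<le> eta (a i) + ln (a j) * a i" if i: "i \<in> tail (j - 1)" for i
  proof -
    have iI: "i \<in> Idx n" and ji: "j \<le> i" using i assms by auto
    have jI: "j \<in> Idx n"
      using iI ji assms by (auto simp: Idx_def intro: order_trans[of _ "enat i"])
    have "ln (a i) \<le> ln (a j)" using a_antimono[OF jI iI ji] a_pos[OF iI] by simp
    then show ?thesis using a_pos[OF iI] by (simp add: eta_a[OF iI] algebra_simps mult_left_mono)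
  qed
  ultimately have "0 \<le> s (j - 1) + ln (a j) * d (j - 1)" by (rule has_sum_nonneg)
  then show ?thesis by (simp add: thresh_def mult.commute)
qed

lemma thresh_Suc_le:
  assumes "1 \<le> k"
  shows "thresh (Suc k) \<le> thresh k"
proof (cases "Suc k \<in> Idx n")
  case True
  then have kI: "k \<in> Idx n" using assms by (auto simp: Idx_def intro: order_trans[of _ "enat (Suc k)"])
  have "ln (a (Suc k)) \<le> ln (a k)" using a_antimono[OF kI True] a_pos[OF True] by simp
  then have "d k * ln (a (Suc k)) \<le> d k * ln (a k)" using d_nonneg by (rule mult_left_mono)
  then show ?thesis by (simp add: thresh_Suc thresh_Idx[OF kI])
next
  case False
  then show ?thesis using thresh_nonneg[OF assms] by (simp add: thresh_Suc d_eq_0 s_eq_0)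
qed

lemma bk_eq_thresh:
  assumes "1 \<le> k"
  shows "bk n a c k = ereal (thresh k)"
proof (cases "enat k = n")
  case True
  then have "k \<in> Idx n" "Suc k \<notin> Idx n" using assms by (auto simp: Idx_def)
  then have "thresh k = 0" by (simp add: thresh_Idx d_eq_0 s_eq_0)
  then show ?thesis using True assms by (simp add: bk_def)
next
  case False
  then show ?thesis using assms by (simp add: bk_def thresh_def)
qed

lemma bk_0: "bk n a c 0 = (if c * d 0 < 1 then ereal (thresh 1 / (1 - c * d 0)) else \<infinity>)"
  by (simp add: bk_def thresh_def)

lemma bk_Suc_le: "bk n a c (Suc k) \<le> bk n a c k"
proof (cases k)
  case 0
  have "ereal (thresh 1) \<le> bk n a c 0"
  proof (cases "c * d 0 < 1")
    case True
    have "thresh 1 * (1 - c * d 0) \<le> thresh 1"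
      using thresh_nonneg[of 1] c_nonneg d_nonneg by (simp add: mult_left_le)
    then show ?thesis using True by (simp add: bk_0 le_divide_eq)
  qed (simp add: bk_0)
  then show ?thesis using 0 by (simp add: bk_eq_thresh)
next
  case (Suc m)
  then show ?thesis using thresh_Suc_le[of k] by (simp add: bk_eq_thresh)
qed

lemma bk_antimono: "j \<le> k \<Longrightarrow> bk n a c k \<le> bk n a c j"
  by (rule lift_Suc_antimono_le[of "bk n a c"]) (auto intro: bk_Suc_le)

text \<open>For infinite n this is where summability of eta(a_i) enters: the entropy tails s_k tend to 0.\<close>

lemma thresh_eventually_less:
  assumes "0 < \<epsilon>"
  obtains K where "1 \<le> K" "enat K \<le> n" "thresh K < \<epsilon>"
proof (cases n)
  case (enat N)
  then have N: "2 \<le> N" using two_le_n by (simp add: numeral_eq_enat)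
  then have "bk n a c N = 0" using enat by (simp add: bk_def)
  then have "thresh N = 0" using bk_eq_thresh[of N] N by simp
  then show ?thesis using N enat assms by (intro that[of N]) auto
next
  case infinity
  let ?S = "\<Sum>\<^sub>\<infinity>i\<in>Idx n. eta (a i)"
  obtain X where X: "finite X" "X \<subseteq> Idx n" "dist (sum (\<lambda>i. eta (a i)) X) ?S \<le> \<epsilon>/2"
    using infsum_finite_approximation[OF eta_summable, of "\<epsilon>/2"] assms by auto
  define m where "m = Max (insert 0 X)"
  have "X \<subseteq> head m" using X unfolding m_def by auto
  then have "sum (\<lambda>i. eta (a i)) X \<le> sum (\<lambda>i. eta (a i)) (head m)"
    using finite_head eta_a_nonneg by (intro sum_mono2) auto
  moreover have "?S = sum (\<lambda>i. eta (a i)) (head m) + s m"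
    using has_sum_unique[OF has_sum_infsum[OF eta_summable] has_sum_head_tail[OF has_sum_s]] .
  moreover have "\<bar>sum (\<lambda>i. eta (a i)) X - ?S\<bar> \<le> \<epsilon>/2" using X(3) by (simp add: dist_real_def)
  ultimately have sm: "s m \<le> \<epsilon>/2" using abs_ge_minus_self[of "sum (\<lambda>i. eta (a i)) X - ?S"] by linarith
  have m: "Suc m \<in> Idx n" using infinity by (simp add: Idx_def)
  have "ln (a (Suc m)) \<le> 0" using a_pos[OF m] a_le_1[OF m] by simp
  then have "d m * ln (a (Suc m)) \<le> 0" using d_nonneg by (simp add: mult_nonneg_nonpos)
  then have "thresh (Suc m) < \<epsilon>" using sm assms by (simp add: thresh_Suc)
  then show ?thesis using infinity by (intro that[of "Suc m"]) auto
qed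

lemma regime_cases:
  assumes "0 < b"
  shows "b \<in> Bc n a c \<or> (\<exists>k. enat k < n \<and> b \<in> Bset n a c k)"
proof (cases "b \<in> Bc n a c")
  case False
  then have not_Bc: "\<not> bk n a c 0 \<le> ereal b" by (simp add: Bc_def)
  obtain K where K: "1 \<le> K" "enat K \<le> n" "thresh K < b"
    using thresh_eventually_less[OF assms] .
  have PK: "bk n a c K \<le> ereal b" using K by (simp add: bk_eq_thresh)
  define j where "j = (LEAST j. bk n a c j \<le> ereal b)"
  have Pj: "bk n a c j \<le> ereal b" unfolding j_def by (rule LeastI[of "\<lambda>j. bk n a c j \<le> ereal b" K, OF PK])
  have jK: "j \<le> K" unfolding j_def by (rule Least_le[of "\<lambda>j. bk n a c j \<le> ereal b" K, OF PK])
  obtain k where jk: "j = Suc k" using Pj not_Bc by (cases j) auto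
  have "\<not> bk n a c k \<le> ereal b"
    using not_less_Least[of k "\<lambda>j. bk n a c j \<le> ereal b"] jk unfolding j_def by auto
  moreover have "enat j \<le> n" using jK K(2) by (meson enat_ord_simps(1) order_trans)
  then have "enat k < n" using jk by (simp add: Suc_ile_eq)
  ultimately show ?thesis using Pj jk by (auto simp: Bset_def)
qed simp

lemma Bset_unique:
  assumes "b \<in> Bset n a c k" "b \<in> Bset n a c j"
  shows "k = j"
proof (rule ccontr)
  have False if p: "b \<in> Bset n a c p" and q: "b \<in> Bset n a c q" and pq: "p < q" for p q
  proof -
    have "bk n a c q \<le> bk n a c (Suc p)" using pq by (intro bk_antimono) simp
    also have "\<dots> \<le> ereal b" using p by (simp add: Bset_def)
    also have "\<dots> < bk n a c q" using q by (simp add: Bset_def)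
    finally show False by simp
  qed
  moreover assume "k \<noteq> j"
  ultimately show False using assms by (metis linorder_neqE_nat)
qed

lemma bk_bounds_of_Bset: "b \<in> Bset n a c k \<Longrightarrow> bk n a c (Suc k) \<le> ereal b \<and> ereal b \<le> bk n a c k"
  unfolding Bset_def by (auto intro: less_imp_le)

lemma Bc_not_Bset: "b \<in> Bc n a c \<Longrightarrow> b \<notin> Bset n a c k"
  using bk_antimono[of 0 k] by (auto simp: Bc_def Bset_def)

section \<open>Water-filling profiles\<close>

text \<open>On the tail exp(-b y_i) = exp(-mu) a_i; the multiplier mu is fixed by the constraint.\<close>

definition profile :: "nat \<Rightarrow> real \<Rightarrow> real \<Rightarrow> real \<Rightarrow> nat \<Rightarrow> real" where
  "profile k v \<mu> b i = (if i \<in> Idx n then if i \<le> k then v else (\<mu> - ln (a i)) / b else 0)"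

lemma exp_profile_tail:
  assumes "b \<noteq> 0" "i \<in> tail k"
  shows "exp (- b * profile k v \<mu> b i) = exp (- \<mu>) * a i"
proof -
  have "0 < a i" using assms(2) a_pos by simp
  have "- b * profile k v \<mu> b i = ln (a i) - \<mu>"
    using assms by (simp add: profile_def field_simps)
  then have "exp (- b * profile k v \<mu> b i) = exp (ln (a i) - \<mu>)" by (rule arg_cong)
  also have "\<dots> = exp (- \<mu>) * a i"
    unfolding diff_conv_add_uminus exp_add using \<open>0 < a i\<close> by (simp add: mult.commute)
  finally show ?thesis .
qed

lemma has_sum_a_profile_tail:
  assumes "b \<noteq> 0"
  shows "((\<lambda>i. a i * profile k v \<mu> b i) has_sum ((\<mu> * d k + s k) / b)) (tail k)"
proof -
  have "((\<lambda>i. (\<mu> * a i + eta (a i)) / b) has_sum ((\<mu> * d k + s k) / b)) (tail k)"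
    by (intro has_sum_divide_const has_sum_add has_sum_cmult_right has_sum_d has_sum_s)
  then show ?thesis
    by (rule has_sum_cong[THEN iffD1, rotated]) (use assms in \<open>simp add: profile_def eta_a field_simps\<close>)
qed

lemma has_sum_exp_profile:
  assumes b: "b \<noteq> 0" and kn: "enat k < n"
  shows "((\<lambda>i. exp (- b * profile k v \<mu> b i)) has_sum (real k * exp (- b * v) + exp (- \<mu>) * d k)) (Idx n)"
proof -
  have "((\<lambda>i. exp (- b * profile k v \<mu> b i)) has_sum (exp (- \<mu>) * d k)) (tail k)"
    using has_sum_cmult_right[OF has_sum_d[of k], where c = "exp (- \<mu>)"]
    by (rule has_sum_cong[THEN iffD1, rotated]) (rule exp_profile_tail[OF b, symmetric])
  note total = has_sum_head_tail[OF this]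
  have "(\<Sum>i\<in>head k. exp (- b * profile k v \<mu> b i)) = (\<Sum>i\<in>head k. exp (- b * v))"
    by (rule sum.cong) (simp_all add: profile_def)
  also have "\<dots> = real k * exp (- b * v)"
    using head_eq[OF kn] by simp
  finally show ?thesis using total by (simp only:)
qed

text \<open>The tangent weights of a profile are proportional to a_i on the tail, so on Omega their
  linear form only depends on the coordinates in the block.\<close>

lemma has_sum_weighted_profile:
  assumes b: "b \<noteq> 0" and x: "x \<in> Omega n a c"
  shows "((\<lambda>i. exp (- b * profile k v \<mu> b i) * x i) has_sum
           (exp (- \<mu>) + (\<Sum>i\<in>head k. (exp (- b * v) - exp (- \<mu>) * a i) * x i))) (Idx n)"
proof -
  let ?w = "\<lambda>i. exp (- b * profile k v \<mu> b i)"
  have "((\<lambda>i. a i * x i) has_sum (1 - (\<Sum>i\<in>head k. a i * x i))) (tail k)"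
    using Omega_has_sum[OF x] by (rule has_sum_tail)
  then have "((\<lambda>i. exp (- \<mu>) * (a i * x i)) has_sum (exp (- \<mu>) * (1 - (\<Sum>i\<in>head k. a i * x i)))) (tail k)"
    by (rule has_sum_cmult_right)
  then have "((\<lambda>i. ?w i * x i) has_sum (exp (- \<mu>) * (1 - (\<Sum>i\<in>head k. a i * x i)))) (tail k)"
    by (rule has_sum_cong[THEN iffD1, rotated]) (subst exp_profile_tail[OF b]; simp add: mult.assoc)
  note total = has_sum_head_tail[OF this]
  have "(\<Sum>i\<in>head k. ?w i * x i) = (\<Sum>i\<in>head k. exp (- b * v) * x i)"
    by (rule sum.cong) (simp_all add: profile_def)
  moreover have "(\<Sum>i\<in>head k. (exp (- b * v) - exp (- \<mu>) * a i) * x i)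
      = (\<Sum>i\<in>head k. exp (- b * v) * x i) - exp (- \<mu>) * (\<Sum>i\<in>head k. a i * x i)"
    by (simp add: left_diff_distrib sum_subtractf sum_distrib_left mult.assoc)
  ultimately have "(\<Sum>i\<in>head k. ?w i * x i) + exp (- \<mu>) * (1 - (\<Sum>i\<in>head k. a i * x i))
      = exp (- \<mu>) + (\<Sum>i\<in>head k. (exp (- b * v) - exp (- \<mu>) * a i) * x i)"
    by (simp add: algebra_simps)
  with total show ?thesis by (simp only:)
qed

lemma profile_mono:
  assumes b: "0 < b" and block_le: "1 \<le> k \<Longrightarrow> v \<le> (\<mu> - ln (a (Suc k))) / b"
    and i: "i \<in> Idx n - {1}"
  shows "profile k v \<mu> b (i - 1) \<le> profile k v \<mu> b i"
proof -
  have i2: "2 \<le> i" and iI: "i \<in> Idx n" using i by (auto simp: Idx_def)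
  have i1I: "i - 1 \<in> Idx n"
    using iI i2 by (auto simp: Idx_def intro: order_trans[of _ "enat i"])
  consider "i \<le> k" | "i = Suc k" | "Suc k < i" by linarith
  then show ?thesis
  proof cases
    case 1
    then have "i - 1 \<le> k" by simp
    then show ?thesis using 1 iI i1I by (simp add: profile_def)
  next
    case 2
    then have "1 \<le> k" using i2 by simp
    then show ?thesis using block_le iI i1I 2 by (simp add: profile_def)
  next
    case 3
    then have "\<not> i - 1 \<le> k" by simp
    have "ln (a i) \<le> ln (a (i - 1))" using a_antimono[OF i1I iI] a_pos[OF iI] by simp
    then have "(\<mu> - ln (a (i - 1))) / b \<le> (\<mu> - ln (a i)) / b" using b by (intro divide_right_mono) auto
    then show ?thesis using \<open>\<not> i - 1 \<le> k\<close> 3 iI i1I by (simp add: profile_def)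
  qed
qed

lemma profile_in_Omega:
  assumes b: "0 < b" and v: "0 \<le> v" and mu: "ln (a (Suc k)) \<le> \<mu>"
    and block_le: "1 \<le> k \<Longrightarrow> v \<le> c \<and> v \<le> (\<mu> - ln (a (Suc k))) / b"
    and first_le: "k = 0 \<Longrightarrow> (\<mu> - ln (a 1)) / b \<le> c"
    and constraint: "v * sum a (head k) + (\<mu> * d k + s k) / b = 1"
  shows "profile k v \<mu> b \<in> Omega n a c"
proof -
  let ?y = "profile k v \<mu> b"
  have first: "?y 1 \<in> {0..c}"
  proof (cases "k = 0")
    case True
    then have "?y 1 = (\<mu> - ln (a 1)) / b" using one_in_Idx by (simp add: profile_def)
    moreover have "0 \<le> \<mu> - ln (a 1)" using mu True by (simp add: One_nat_def)
    ultimately show ?thesis using first_le[OF True] b by simp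
  next
    case False
    then have "1 \<le> k" by simp
    then show ?thesis using one_in_Idx block_le v by (simp add: profile_def)
  qed
  have mono: "?y (i - 1) \<le> ?y i" if "i \<in> Idx n - {1}" for i
    using profile_mono[OF b _ that] block_le by blast
  have "(\<Sum>i\<in>head k. a i * ?y i) = (\<Sum>i\<in>head k. v * a i)"
    by (rule sum.cong) (simp_all add: profile_def)
  then have sum_eq: "(\<Sum>i\<in>head k. a i * ?y i) + (\<mu> * d k + s k) / b = 1"
    using constraint by (simp add: sum_distrib_left)
  have "b \<noteq> 0" using b by simp
  from has_sum_head_tail[OF has_sum_a_profile_tail[OF this, where k = k and v = v and \<mu> = \<mu>]]
  have total: "((\<lambda>i. a i * ?y i) has_sum 1) (Idx n)" by (simp only: sum_eq)
  have "?y i = 0" if "i \<notin> Idx n" for i using that by (simp add: profile_def)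
  then show ?thesis
    unfolding Omega_def mem_Collect_eq
    using first mono has_sum_imp_summable[OF total] infsumI[OF total] by blast
qed

lemma profile_strict_minimiser:
  assumes b: "0 < b" and kn: "enat k < n"
    and feasible: "profile k v \<mu> b \<in> Omega n a c"
    and block: "\<And>x i. x \<in> Omega n a c \<Longrightarrow> i \<in> head k \<Longrightarrow>
                  (exp (- b * v) - exp (- \<mu>) * a i) * (x i - v) \<le> 0"
  shows "strict_minimiser n a c b (profile k v \<mu> b)"
  unfolding strict_minimiser_def
proof (intro conjI ballI impI feasible)
  let ?y = "profile k v \<mu> b"
  let ?W = "\<lambda>z. exp (- \<mu>) + (\<Sum>i\<in>head k. (exp (- b * v) - exp (- \<mu>) * a i) * z i)"
  have b0: "b \<noteq> 0" using b by simp
  fix x assume x: "x \<in> Omega n a c" and "x \<noteq> ?y"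
  then obtain j where j: "x j \<noteq> ?y j" by (meson ext)
  have jI: "j \<in> Idx n" using x j by (cases "j \<in> Idx n") (auto simp: Omega_def profile_def)
  have "(\<Sum>i\<in>head k. (exp (- b * v) - exp (- \<mu>) * a i) * ?y i)
      = (\<Sum>i\<in>head k. (exp (- b * v) - exp (- \<mu>) * a i) * v)"
    by (rule sum.cong) (simp_all add: profile_def)
  then have "?W x - ?W ?y = (\<Sum>i\<in>head k. (exp (- b * v) - exp (- \<mu>) * a i) * (x i - v))"
    by (simp add: sum_subtractf right_diff_distrib)
  also have "\<dots> \<le> 0" using block[OF x] by (auto intro!: sum_nonpos)
  finally have "?W x \<le> ?W ?y" by linarith
  then show "objF n b ?y < objF n b x"
    unfolding objF_def
    by (rule infsum_ennreal_exp_less[OF b has_sum_exp_profile[OF b0 kn, where v = v and \<mu> = \<mu>]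
          has_sum_weighted_profile[OF b0 x] has_sum_weighted_profile[OF b0 feasible] _ jI j])
qed

lemma objF_profile:
  assumes "b \<noteq> 0" "enat k < n"
  shows "objF n b (profile k v \<mu> b) = ennreal (real k * exp (- b * v) + exp (- \<mu>) * d k)"
proof -
  note h = has_sum_exp_profile[OF assms, where v = v and \<mu> = \<mu>]
  show ?thesis
    unfolding objF_def infsum_ennreal_eq[OF has_sum_imp_summable[OF h] exp_ge_zero] infsumI[OF h] by simp
qed

section \<open>The three regimes\<close>

lemma d_0_eq: "d 0 = a 1 + d 1"
  using d_Suc[of 0] one_in_Idx by simp

lemma d_1_pos: "0 < d 1"
  using d_pos[OF one_less_n] .

context
  fixes b :: real and k :: nat
  assumes b_pos: "0 < b" and k_lt_n: "enat k < n"
    and b_ge: "bk n a c (Suc k) \<le> ereal b" and b_le: "ereal b \<le> bk n a c k"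
begin

lemma first_coordinate_le_c:
  assumes k0: "k = 0"
  shows "((b - s k) / d k - ln (a 1)) / b \<le> c"
proof -
  define \<mu> where "\<mu> = (b - s k) / d k"
  have d0: "0 < d 0" using d_pos[OF k_lt_n] k0 by simp
  have "b - thresh 1 \<le> c * b * d 0"
  proof (cases "c * d 0 < 1")
    case True
    then have "b \<le> thresh 1 / (1 - c * d 0)" using b_le k0 by (simp add: bk_0)
    then have "b * (1 - c * d 0) \<le> thresh 1" using True by (simp add: le_divide_eq)
    then show ?thesis by (simp add: algebra_simps)
  next
    case False
    then have "b \<le> b * (c * d 0)" using b_pos by simp
    then show ?thesis using thresh_nonneg[of 1] by (simp add: algebra_simps)
  qed
  moreover have "\<mu> - ln (a 1) = (b - thresh 1) / d 0"
    unfolding \<mu>_def thresh_def using k0 d0 by (simp add: field_simps)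
  ultimately have "\<mu> - ln (a 1) \<le> c * b"
    using d0 by (simp add: divide_le_eq mult.commute mult.left_commute)
  then have "(\<mu> - ln (a 1)) / b \<le> c" using b_pos by (simp add: divide_le_eq mult.commute)
  then show ?thesis unfolding \<mu>_def .
qed

lemma strict_minimiser_zero_block: "strict_minimiser n a c b (profile k 0 ((b - s k) / d k) b)"
proof -
  define \<mu> where "\<mu> = (b - s k) / d k"
  have dk: "0 < d k" using d_pos[OF k_lt_n] .
  have "thresh (Suc k) \<le> b" using b_ge by (simp add: bk_eq_thresh)
  then have mu: "ln (a (Suc k)) \<le> \<mu>"
    unfolding \<mu>_def thresh_Suc using dk by (simp add: pos_le_divide_eq mult.commute)
  have first_le: "(\<mu> - ln (a 1)) / b \<le> c" if "k = 0"
    using first_coordinate_le_c[OF that] unfolding \<mu>_def .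
  have constraint: "0 * sum a (head k) + (\<mu> * d k + s k) / b = 1"
    unfolding \<mu>_def using dk b_pos by simp
  have feasible: "profile k 0 \<mu> b \<in> Omega n a c"
    by (rule profile_in_Omega[OF b_pos _ mu _ first_le constraint]) (use mu b_pos c_nonneg in auto)
  have block: "(exp (- b * 0) - exp (- \<mu>) * a i) * (x i - 0) \<le> 0"
    if x: "x \<in> Omega n a c" and i: "i \<in> head k" for x i
  proof -
    have k1: "1 \<le> k" and iI: "i \<in> Idx n" and ik: "i \<le> k" using i by (auto simp: Idx_def)
    have kI: "k \<in> Idx n" using k1 k_lt_n by (auto simp: Idx_def intro: less_imp_le)
    have "b \<le> thresh k" using b_le k1 by (simp add: bk_eq_thresh)
    then have "\<mu> \<le> ln (a k)"
      unfolding \<mu>_def thresh_Idx[OF kI] using dk by (simp add: divide_le_eq mult.commute)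
    then have "exp \<mu> \<le> a k" using a_pos[OF kI] by (metis exp_le_cancel_iff exp_ln)
    also have "a k \<le> a i" using a_antimono[OF iI kI ik] .
    finally have "1 \<le> exp (- \<mu>) * a i" by (simp add: exp_minus field_simps)
    then show ?thesis using Omega_nonneg[OF x, of i] by (simp add: mult_nonpos_nonneg)
  qed
  have "strict_minimiser n a c b (profile k 0 \<mu> b)"
    by (intro profile_strict_minimiser[OF b_pos k_lt_n feasible] block)
  then show ?thesis unfolding \<mu>_def .
qed

lemma infval_zero_block: "infval n a c b = ennreal (real k + d k * exp ((s k - b) / d k))"
proof -
  have exponent: "- ((b - s k) / d k) = (s k - b) / d k" by (simp add: minus_divide_left)
  have "infval n a c b = objF n b (profile k 0 ((b - s k) / d k) b)"
    by (rule strict_minimiser_infval[OF strict_minimiser_zero_block])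
  also have "\<dots> = ennreal (real k * exp (- b * 0) + exp (- ((b - s k) / d k)) * d k)"
    by (rule objF_profile) (use b_pos k_lt_n in auto)
  also have "\<dots> = ennreal (real k + d k * exp ((s k - b) / d k))"
    unfolding exponent by (simp add: mult.commute)
  finally show ?thesis .
qed

lemma xopt_zero_block:
  "i \<in> Idx n \<Longrightarrow> xopt n a c b i = (if i \<le> k then 0 else (1 / b) * ((b - s k) / d k - ln (a i)))"
  by (simp add: strict_minimiser_xopt[OF strict_minimiser_zero_block] profile_def)

end

context
  fixes b :: real
  assumes b_pos: "0 < b" and b_ge: "bk n a c 0 \<le> ereal b"
begin

lemma cap_le_tail_profile:
  assumes j: "j \<in> {1, 2}"
  shows "c \<le> ((b * (1 - a 1 * c) - s 1) / d 1 - ln (a j)) / b"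
proof -
  have cd: "c * d 0 < 1" using b_ge by (auto simp: bk_0 split: if_splits)
  have "thresh 1 / (1 - c * d 0) \<le> b" using b_ge cd by (simp add: bk_0)
  then have "thresh 1 \<le> b * (1 - c * d 0)" using cd by (simp add: divide_le_eq mult.commute)
  moreover have "thresh j \<le> thresh 1" using j thresh_Suc_le[of 1] by (auto simp: numeral_2_eq_2)
  moreover have "thresh j = s 1 + d 1 * ln (a j)"
    using j thresh_Idx[OF one_in_Idx] thresh_Suc[of 1] by (auto simp: numeral_2_eq_2)
  ultimately have "c * b * d 1 \<le> b * (1 - a 1 * c) - s 1 - d 1 * ln (a j)"
    using d_0_eq by (simp add: algebra_simps)
  then have "c * b \<le> (b * (1 - a 1 * c) - s 1) / d 1 - ln (a j)"
    using d_1_pos by (simp add: le_divide_eq field_simps)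
  then show ?thesis using b_pos by (simp add: le_divide_eq mult.commute)
qed

lemma strict_minimiser_cap:
  "strict_minimiser n a c b (profile 1 c ((b * (1 - a 1 * c) - s 1) / d 1) b)"
proof -
  define \<mu> where "\<mu> = (b * (1 - a 1 * c) - s 1) / d 1"
  have c_le_1: "c \<le> (\<mu> - ln (a 1)) / b"
    using cap_le_tail_profile[of 1] unfolding \<mu>_def by simp
  have c_le_2: "c \<le> (\<mu> - ln (a (Suc 1))) / b"
    using cap_le_tail_profile[of 2] unfolding \<mu>_def by (simp add: numeral_2_eq_2)
  have mu: "ln (a (Suc 1)) \<le> \<mu>"
  proof -
    have "0 \<le> (\<mu> - ln (a (Suc 1))) / b" using c_le_2 c_nonneg by linarith
    then show ?thesis using b_pos by (simp add: zero_le_divide_iff)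
  qed
  have constraint: "c * sum a (head 1) + (\<mu> * d 1 + s 1) / b = 1"
    unfolding head_eq[OF one_less_n] \<mu>_def using d_1_pos b_pos by (simp add: field_simps)
  have feasible: "profile 1 c \<mu> b \<in> Omega n a c"
    by (rule profile_in_Omega[OF b_pos c_nonneg mu _ _ constraint]) (use c_le_2 in auto)
  have block: "(exp (- b * c) - exp (- \<mu>) * a i) * (x i - c) \<le> 0"
    if x: "x \<in> Omega n a c" and i: "i \<in> head 1" for x i
  proof -
    have i1: "i = 1" using i by (auto simp: Idx_def)
    have "c * b \<le> \<mu> - ln (a 1)" using c_le_1 b_pos by (simp add: le_divide_eq mult.commute)
    then have "exp (ln (a 1) + - \<mu>) \<le> exp (- b * c)" by (simp add: algebra_simps)
    then have "exp (- \<mu>) * a 1 \<le> exp (- b * c)"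
      by (simp only: exp_add exp_ln[OF a_pos[OF one_in_Idx]] mult.commute)
    moreover have "x 1 \<le> c" using x by (simp add: Omega_def)
    ultimately show ?thesis using i1 by (simp add: mult_nonneg_nonpos)
  qed
  have "strict_minimiser n a c b (profile 1 c \<mu> b)"
    by (intro profile_strict_minimiser[OF b_pos one_less_n feasible] block)
  then show ?thesis unfolding \<mu>_def .
qed

lemma infval_cap:
  "infval n a c b = ennreal (exp (- b * c) * (1 + d 1 * exp ((s 1 - b * (1 - c * d 0)) / d 1)))"
proof -
  have "- ((b * (1 - a 1 * c) - s 1) / d 1) = - b * c + (s 1 - b * (1 - c * d 0)) / d 1"
    unfolding d_0_eq using d_1_pos by (simp add: field_simps)
  then have exponent: "exp (- ((b * (1 - a 1 * c) - s 1) / d 1))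
      = exp (- b * c) * exp ((s 1 - b * (1 - c * d 0)) / d 1)"
    unfolding exp_add[symmetric] by (rule arg_cong)
  have "infval n a c b = objF n b (profile 1 c ((b * (1 - a 1 * c) - s 1) / d 1) b)"
    by (rule strict_minimiser_infval[OF strict_minimiser_cap])
  also have "\<dots> = ennreal (real 1 * exp (- b * c) + exp (- ((b * (1 - a 1 * c) - s 1) / d 1)) * d 1)"
    by (rule objF_profile) (use b_pos one_less_n in auto)
  also have "\<dots> = ennreal (exp (- b * c) * (1 + d 1 * exp ((s 1 - b * (1 - c * d 0)) / d 1)))"
    unfolding exponent by (simp add: algebra_simps)
  finally show ?thesis .
qed

lemma xopt_cap:
  "i \<in> Idx n \<Longrightarrow>
     xopt n a c b i = (if i = 1 then c else (1 / b) * ((b * (1 - a 1 * c) - s 1) / d 1 - ln (a i)))"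
  by (auto simp: strict_minimiser_xopt[OF strict_minimiser_cap] profile_def Idx_def)

end

lemma strict_minimiser_exists:
  assumes b: "0 < b"
  obtains y where "strict_minimiser n a c b y"
proof -
  from regime_cases[OF b] show ?thesis
  proof
    assume "b \<in> Bc n a c"
    then show ?thesis using that strict_minimiser_cap[OF b] by (simp add: Bc_def)
  next
    assume "\<exists>k. enat k < n \<and> b \<in> Bset n a c k"
    then obtain k where "enat k < n" "b \<in> Bset n a c k" by blast
    then show ?thesis using that strict_minimiser_zero_block[OF b] bk_bounds_of_Bset by blast
  qed
qed

lemma ex1_minimiser:
  assumes "0 < b"
  shows "\<exists>!x. x \<in> Omega n a c \<and> (\<forall>i. 0 \<le> x i) \<and> objF n b x = infval n a c b"
proof -
  obtain y where "strict_minimiser n a c b y" using strict_minimiser_exists[OF assms] by blast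
  then show ?thesis by (rule strict_minimiser_ex1)
qed

lemma objF_xopt:
  assumes "0 < b"
  shows "objF n b (xopt n a c b) = infval n a c b"
proof -
  obtain y where "strict_minimiser n a c b y" using strict_minimiser_exists[OF assms] by blast
  then show ?thesis by (simp add: strict_minimiser_xopt strict_minimiser_infval)
qed

section \<open>Continuity and the value function\<close>

lemma regime_cover:
  assumes "0 < e"
  obtains K where "enat K \<le> n"
    "{e..} \<subseteq> (\<Union>k<K. {t. bk n a c (Suc k) \<le> ereal t \<and> ereal t \<le> bk n a c k}) \<union> Bc n a c"
proof -
  obtain K where K: "1 \<le> K" "enat K \<le> n" "thresh K < e"
    using thresh_eventually_less[OF assms] .
  have "{e..} \<subseteq> (\<Union>k<K. {t. bk n a c (Suc k) \<le> ereal t \<and> ereal t \<le> bk n a c k}) \<union> Bc n a c"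
  proof
    fix t assume t: "t \<in> {e..}"
    then have "0 < t" using assms by simp
    then consider "t \<in> Bc n a c" | k where "enat k < n" "t \<in> Bset n a c k"
      using regime_cases by blast
    then show "t \<in> (\<Union>k<K. {t. bk n a c (Suc k) \<le> ereal t \<and> ereal t \<le> bk n a c k}) \<union> Bc n a c"
    proof cases
      case (2 k)
      have "k < K"
      proof (rule ccontr)
        assume "\<not> k < K"
        then have "bk n a c k \<le> ereal (thresh K)" using bk_antimono[of K k] bk_eq_thresh[OF K(1)] by simp
        also have "\<dots> \<le> ereal t" using K(3) t by simp
        finally have "bk n a c k \<le> ereal t" .
        moreover have "ereal t < bk n a c k" using 2(2) by (simp add: Bset_def)
        ultimately show False by (blast dest: leD)
      qed
      then show ?thesis using bk_bounds_of_Bset[OF 2(2)] by blast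
    qed simp
  qed
  with K(2) show ?thesis by (rule that)
qed

lemma continuous_on_xopt_zero_block:
  assumes e: "0 < e" and kn: "enat k < n" and i: "i \<in> Idx n"
  shows "continuous_on ({e..} \<inter> {t. bk n a c (Suc k) \<le> ereal t \<and> ereal t \<le> bk n a c k})
           (\<lambda>b. xopt n a c b i)"
proof -
  let ?P = "{e..} \<inter> {t. bk n a c (Suc k) \<le> ereal t \<and> ereal t \<le> bk n a c k}"
  have "continuous_on ?P (\<lambda>t. if i \<le> k then 0 else (1 / t) * ((t - s k) / d k - ln (a i)))"
  proof (cases "i \<le> k")
    case False
    have "continuous_on ?P (\<lambda>t. (1 / t) * ((t - s k) / d k - ln (a i)))"
      by (intro continuous_intros) (use e d_pos[OF kn] in auto)
    then show ?thesis using False by simp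
  qed simp
  moreover have "(if i \<le> k then 0 else (1 / t) * ((t - s k) / d k - ln (a i))) = xopt n a c t i"
    if "t \<in> ?P" for t
  proof -
    have t: "0 < t" "bk n a c (Suc k) \<le> ereal t" "ereal t \<le> bk n a c k" using that e by auto
    show ?thesis by (rule xopt_zero_block[OF t(1) kn t(2,3) i, symmetric])
  qed
  ultimately show ?thesis by (rule continuous_on_eq)
qed

lemma continuous_on_xopt_cap:
  assumes e: "0 < e" and i: "i \<in> Idx n"
  shows "continuous_on ({e..} \<inter> Bc n a c) (\<lambda>b. xopt n a c b i)"
proof -
  have "continuous_on ({e..} \<inter> Bc n a c)
          (\<lambda>t. if i = 1 then c else (1 / t) * ((t * (1 - a 1 * c) - s 1) / d 1 - ln (a i)))"
  proof (cases "i = 1")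
    case False
    have "continuous_on ({e..} \<inter> Bc n a c) (\<lambda>t. (1 / t) * ((t * (1 - a 1 * c) - s 1) / d 1 - ln (a i)))"
      by (intro continuous_intros) (use e d_1_pos in auto)
    then show ?thesis using False by simp
  qed simp
  moreover have "(if i = 1 then c else (1 / t) * ((t * (1 - a 1 * c) - s 1) / d 1 - ln (a i)))
      = xopt n a c t i" if "t \<in> {e..} \<inter> Bc n a c" for t
  proof -
    have t: "0 < t" "bk n a c 0 \<le> ereal t" using that e by (auto simp: Bc_def)
    show ?thesis by (rule xopt_cap[OF t i, symmetric])
  qed
  ultimately show ?thesis by (rule continuous_on_eq)
qed

text \<open>Above any e > 0 only finitely many closed regimes occur, so the piecewise formulas paste
  together.\<close>

lemma continuous_on_xopt_atLeast:
  assumes e: "0 < e" and i: "i \<in> Idx n"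
  shows "continuous_on {e..} (\<lambda>b. xopt n a c b i)"
proof -
  obtain K where K: "enat K \<le> n" and cover:
    "{e..} \<subseteq> (\<Union>k<K. {t. bk n a c (Suc k) \<le> ereal t \<and> ereal t \<le> bk n a c k}) \<union> Bc n a c"
    using regime_cover[OF e] .
  define P where "P k = {e..} \<inter> {t. bk n a c (Suc k) \<le> ereal t \<and> ereal t \<le> bk n a c k}" for k
  have closed_P: "closed (P k)" for k
    unfolding P_def by (intro closed_Int closed_atLeast closed_Collect_conj closed_ereal_ge closed_ereal_le)
  have closed_Bc: "closed ({e..} \<inter> Bc n a c)"
    unfolding Bc_def by (intro closed_Int closed_atLeast closed_ereal_ge)
  have "continuous_on (P k) (\<lambda>b. xopt n a c b i)" if "k \<in> {..<K}" for k
  proof -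
    have "enat k < n" using that K by (meson enat_ord_simps(2) lessThan_iff less_le_trans)
    then show ?thesis unfolding P_def by (rule continuous_on_xopt_zero_block[OF e _ i])
  qed
  then have "continuous_on (\<Union>k<K. P k) (\<lambda>b. xopt n a c b i)"
    using closed_P by (intro continuous_on_closed_Union) auto
  then have "continuous_on ((\<Union>k<K. P k) \<union> ({e..} \<inter> Bc n a c)) (\<lambda>b. xopt n a c b i)"
    using closed_P closed_Bc continuous_on_xopt_cap[OF e i]
    by (intro continuous_on_closed_Un closed_UN) auto
  moreover have "{e..} \<subseteq> (\<Union>k<K. P k) \<union> ({e..} \<inter> Bc n a c)"
    using cover by (auto simp: P_def)
  ultimately show ?thesis by (rule continuous_on_subset)
qed

lemma continuous_on_xopt:
  assumes "i \<in> Idx n"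
  shows "continuous_on {0<..} (\<lambda>b. xopt n a c b i)"
proof (intro continuous_at_imp_continuous_on ballI)
  fix b :: real assume "b \<in> {0<..}"
  then have "continuous_on {b/2<..} (\<lambda>b. xopt n a c b i)"
    using continuous_on_xopt_atLeast[OF _ assms, of "b/2"] by (rule_tac continuous_on_subset) auto
  moreover have "b \<in> {b/2<..}" using \<open>b \<in> {0<..}\<close> by simp
  ultimately show "isCont (\<lambda>b. xopt n a c b i) b"
    using continuous_on_eq_continuous_at[OF open_greaterThan] by blast
qed

lemma infval_eq_zc:
  assumes b: "0 < b"
  shows "infval n a c b = ennreal (zc n a c b)"
proof -
  consider "b \<in> Bc n a c" | k where "enat k < n" "b \<in> Bset n a c k"
    using regime_cases[OF b] by blast
  then show ?thesis
  proof cases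
    case 1
    then have "b \<notin> Bset n a c k" for k by (rule Bc_not_Bset)
    then have "zc n a c b = exp (- b * c) * (1 + d 1 * exp ((s 1 - b * (1 - c * d 0)) / d 1))"
      using 1 by (simp add: zc_def)
    then show ?thesis using infval_cap[OF b] 1 by (simp add: Bc_def)
  next
    case (2 k)
    let ?g = "\<lambda>j. indicator (Bset n a c j) b * (real j + d j * exp ((s j - b) / d j))"
    have "(\<Sum>\<^sub>\<infinity>j\<in>{j. enat j < n}. ?g j) = ?g k"
      using 2 by (intro infsum_eq_single) (auto simp: indicator_def dest: Bset_unique)
    moreover have "b \<notin> Bc n a c" using 2(2) Bc_not_Bset by blast
    ultimately have "zc n a c b = real k + d k * exp ((s k - b) / d k)"
      using 2(2) by (simp add: zc_def)
    then show ?thesis using infval_zero_block[OF b 2(1)] bk_bounds_of_Bset[OF 2(2)] by simp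
  qed
qed

lemma bk_1_eq_bk_0:
  assumes "c = 0"
  shows "bk n a c 1 = bk n a c 0"
  using bk_eq_thresh[of 1] bk_0 by (simp add: assms)

lemma Bset'_unique:
  assumes c: "c = 0" and "1 \<le> j" "1 \<le> k" "b \<in> Bset' n a 0 j" "b \<in> Bset' n a 0 k"
  shows "j = k"
proof -
  have one_vs_rest: False if "b \<in> Bset' n a 0 1" "b \<in> Bset' n a 0 m" "2 \<le> m" for m
  proof -
    have "ereal b < bk n a c m" using that c by (simp add: Bset'_def Bset_def)
    also have "\<dots> \<le> bk n a c 2" using that(3) by (rule bk_antimono)
    also have "\<dots> \<le> ereal b" using that(1) c by (simp add: Bset'_def)
    finally show False by simp
  qed
  have rest: "j = k" if "j \<noteq> 1" "k \<noteq> 1"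
    using that assms by (intro Bset_unique[of b]) (auto simp: Bset'_def)
  consider "j = 1" "k = 1" | "j = 1" "2 \<le> k" | "2 \<le> j" "k = 1" | "j \<noteq> 1" "k \<noteq> 1"
    using assms(2,3) by linarith
  then show ?thesis by cases (use one_vs_rest assms(4,5) rest in blast)+
qed

lemma z0_regime:
  assumes c: "c = 0" and b: "0 < b"
  obtains k where "1 \<le> k" "enat k < n" "b \<in> Bset' n a 0 k"
    and "infval n a c b = ennreal (real k + d k * exp ((s k - b) / d k))"
proof -
  consider "b \<in> Bc n a c" | k where "enat k < n" "b \<in> Bset n a c k"
    using regime_cases[OF b] by blast
  then show ?thesis
  proof cases
    case 1
    have "bk n a c 2 \<le> bk n a c 0" by (rule bk_antimono) simp
    then have "b \<in> Bset' n a 0 1" using 1 c by (auto simp: Bset'_def Bc_def intro: order_trans)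
    moreover have "infval n a c b = ennreal (1 + d 1 * exp ((s 1 - b) / d 1))"
      using infval_cap[OF b] 1 c by (simp add: Bc_def)
    ultimately show ?thesis using one_less_n by (intro that[of 1]) auto
  next
    case (2 k)
    have "k \<noteq> 0"
    proof
      assume "k = 0"
      then have "bk n a c 0 \<le> ereal b" "ereal b < bk n a c 0"
        using 2(2) bk_1_eq_bk_0[OF c] by (simp_all add: Bset_def)
      then show False by (blast dest: leD)
    qed
    moreover have "b \<in> Bset' n a 0 k"
      using 2(2) c by (cases "k = 1") (auto simp: Bset'_def Bset_def numeral_2_eq_2)
    ultimately show ?thesis
      using 2(1) infval_zero_block[OF b 2(1)] bk_bounds_of_Bset[OF 2(2)] by (intro that[of k]) auto
  qed
qed

lemma infval_eq_z0:
  assumes c: "c = 0" and b: "0 < b"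
  shows "infval n a c b = ennreal (z0 n a b)"
proof -
  obtain k where k: "1 \<le> k" "enat k < n" "b \<in> Bset' n a 0 k"
    and val: "infval n a c b = ennreal (real k + d k * exp ((s k - b) / d k))"
    using z0_regime[OF c b] .
  have "(\<Sum>\<^sub>\<infinity>j\<in>{j. 1 \<le> j \<and> enat j < n}.
          indicator (Bset' n a 0 j) b * (real j + d j * exp ((s j - b) / d j)))
      = indicator (Bset' n a 0 k) b * (real k + d k * exp ((s k - b) / d k))"
  proof (rule infsum_eq_single)
    show "k \<in> {j. 1 \<le> j \<and> enat j < n}" using k by simp
    fix j assume "j \<in> {j. 1 \<le> j \<and> enat j < n}" "j \<noteq> k"
    then have "b \<notin> Bset' n a 0 j" using Bset'_unique[OF c, of j k] k by blast
    then show "indicator (Bset' n a 0 j) b * (real j + d j * exp ((s j - b) / d j)) = 0" by simp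
  qed
  then show ?thesis using val k(3) by (simp add: z0_def)
qed

lemma regime_interior_solution:
  assumes b: "0 < b" and "bk n a c 1 \<le> ereal b" "ereal b \<le> bk n a c 0"
  shows "(\<forall>i\<in>Idx n. xopt n a c b i = (1 / b) * ((b - s 0) / d 0 - ln (a i)))
      \<and> objF n b (xopt n a c b) = ennreal (d 0 * exp ((s 0 - b) / d 0))"
proof -
  have n0: "enat 0 < n" using less_trans[OF _ one_less_n, of "enat 0"] by simp
  show ?thesis
    using assms xopt_zero_block[OF b n0] infval_zero_block[OF b n0] objF_xopt[OF b]
    by (simp add: Idx_def)
qed

lemma regime_zero_block_solution:
  assumes b: "0 < b" and k: "enat k < n" "bk n a c (Suc k) \<le> ereal b" "ereal b < bk n a c k"
  shows "(\<forall>i\<in>Idx n. i \<le> k \<longrightarrow> xopt n a c b i = 0)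
      \<and> (\<forall>i\<in>Idx n. k < i \<longrightarrow> xopt n a c b i = (1 / b) * ((b - s k) / d k - ln (a i)))
      \<and> objF n b (xopt n a c b) = ennreal (real k + d k * exp ((s k - b) / d k))"
  using xopt_zero_block[OF b k(1,2) less_imp_le[OF k(3)]]
    infval_zero_block[OF b k(1,2) less_imp_le[OF k(3)]] objF_xopt[OF b]
  by simp

lemma regime_cap_solution:
  assumes b: "0 < b" and b0: "bk n a c 0 < ereal b"
  shows "xopt n a c b 1 = c
      \<and> (\<forall>i\<in>Idx n - {1}. xopt n a c b i = (1 / b) * ((b * (1 - a 1 * c) - s 1) / d 1 - ln (a i)))
      \<and> objF n b (xopt n a c b) =
          ennreal (exp (- b * c) * (1 + d 1 * exp ((s 1 - b * (1 - c * d 0)) / d 1)))"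
  using xopt_cap[OF b less_imp_le[OF b0]] one_in_Idx
    infval_cap[OF b less_imp_le[OF b0]] objF_xopt[OF b]
  by simp

end

theorem lemma2:
  fixes n :: enat and a :: "nat \<Rightarrow> real" and c :: real
  assumes n2: "2 \<le> n"
    and apos: "\<forall>i\<in>Idx n. 0 < a i"
    and anoninc: "\<forall>i\<in>Idx n. \<forall>j\<in>Idx n. i \<le> j \<longrightarrow> a j \<le> a i"
    and asum: "a summable_on Idx n" "(\<Sum>\<^sub>\<infinity>i\<in>Idx n. a i) \<le> 1"
    and eta_sum: "(\<lambda>i. eta (a i)) summable_on Idx n"
    and c0: "0 \<le> c"
  shows
    "(\<forall>b>0. \<exists>!x. x \<in> Omega n a c \<and> (\<forall>i. 0 \<le> x i) \<and> objF n b x = infval n a c b)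
   \<and> (\<forall>b>0. bk n a c 1 \<le> ereal b \<and> ereal b \<le> bk n a c 0 \<longrightarrow>
        (\<forall>i\<in>Idx n. xopt n a c b i =
            (1 / b) * ((b - ssum n a 0) / dsum n a 0 - ln (a i)))
        \<and> objF n b (xopt n a c b) = ennreal (dsum n a 0 * exp ((ssum n a 0 - b) / dsum n a 0)))
   \<and> (\<forall>b>0. \<forall>k. 1 \<le> k \<and> enat k < n \<and>
          bk n a c (Suc k) \<le> ereal b \<and> ereal b < bk n a c k \<longrightarrow>
        (\<forall>i\<in>Idx n. i \<le> k \<longrightarrow> xopt n a c b i = 0)
        \<and> (\<forall>i\<in>Idx n. k < i \<longrightarrow> xopt n a c b i =
            (1 / b) * ((b - ssum n a k) / dsum n a k - ln (a i)))
        \<and> objF n b (xopt n a c b) =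
            ennreal (real k + dsum n a k * exp ((ssum n a k - b) / dsum n a k)))
   \<and> (\<forall>b>0. bk n a c 0 < \<infinity> \<and> bk n a c 0 < ereal b \<longrightarrow>
        xopt n a c b 1 = c
        \<and> (\<forall>i\<in>Idx n - {1}. xopt n a c b i =
            (1 / b) * ((b * (1 - a 1 * c) - ssum n a 1) / dsum n a 1 - ln (a i)))
        \<and> objF n b (xopt n a c b) =
            ennreal (exp (- b * c) *
              (1 + dsum n a 1 * exp ((ssum n a 1 - b * (1 - c * dsum n a 0)) / dsum n a 1))))
   \<and> (\<forall>i\<in>Idx n. continuous_on {0<..} (\<lambda>b. xopt n a c b i))
   \<and> (0 < c \<longrightarrow> (\<forall>b>0. infval n a c b = ennreal (zc n a c b)))
   \<and> (c = 0 \<longrightarrow> bk n a c 1 = bk n a c 0 \<and> (\<forall>b>0. infval n a c b = ennreal (z0 n a b)))"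
proof -
  interpret entropy_weights n a c
    using assms by unfold_locales auto
  show ?thesis (is "?P1 \<and> ?P2 \<and> ?P3 \<and> ?P4 \<and> ?P5 \<and> ?P6 \<and> ?P7")
  proof (intro conjI)
    show ?P1 by (intro allI impI ex1_minimiser)
    show ?P2 by (intro allI impI, elim conjE) (rule regime_interior_solution)
    show ?P3 by (intro allI impI, elim conjE) (rule regime_zero_block_solution)
    show ?P4 by (intro allI impI, elim conjE) (rule regime_cap_solution)
    show ?P5 by (intro ballI continuous_on_xopt)
    show ?P6 by (intro impI allI infval_eq_zc)
    show ?P7 by (intro impI conjI allI bk_1_eq_bk_0 infval_eq_z0)
  qed
qed

end
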